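(* Fix a reflection matrix $\mathbf\Phi$ and suppose problem (SDR3.3) has an optimal solution. Then there exists an optimal solution $(\{\mathbf W_k^\star\},\mathbf R_0^\star,u^\star)$ of (SDR3.3) with $\mathbf R_0^\star=\mathbf 0$.
   Context: Let $M,N,K\ge1$ be integers and $\mathcal K=\{1,\dots,K\}$. Fixed data: $\mathbf G\in\mathbb C^{N\times M}$, $\mathbf h_{\mathrm d,k}\in\mathbb C^{M}$, $\mathbf h_{\mathrm r,k}\in\mathbb C^{N}$ ($k\in\mathcal K$), thresholds $\Gamma_k>0$, noise powers $\sigma_k^2>0$, power budget $P_0>0$, an angle $\theta$, spacing $d>0$ and wavelength $\lambda>0$. A reflection matrix is $\mathbf\Phi=\mathrm{diag}(\mathbf v)$, $\mathbf v\in\mathbb C^N$, $|v_n|=1$. For given $\mathbf\Phi$: $\mathbf h_k=\mathbf h_{\mathrm d,k}+\mathbf G^H\mathbf\Phi^H\mathbf h_{\mathrm r,k}$, $\mathbf H_k=\mathbf h_k\mathbf h_k^H$. Let $\mathbf a(\theta)\in\mathbb C^N$ have entries $e^{j2\pi (n-1)d\sin\theta/\lambda}$, $n=1,\dots,N$, and $\dot{\mathbf a}(\theta)$ its derivative in $\theta$; put $\mathbf b=\mathbf G^T\mathbf\Phi^T\mathbf a(\theta)$, $\dot{\mathbf b}=\mathbf G^T\mathbf\Phi^T\dot{\mathbf a}(\theta)$, $\mathbf B=\mathbf b\mathbf b^T$, $\dot{\mathbf B}=\dot{\mathbf b}\mathbf b^T+\mathbf b\dot{\mathbf b}^T$. For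 Hermitian $\mathbf R$ and $u\in\mathbb R$ let $$\mathcal M(\mathbf R,u)=\begin{bmatrix}\mathrm{tr}(\dot{\mathbf B}\mathbf R\dot{\mathbf B}^H)-u & \mathrm{tr}(\mathbf B\mathbf R\dot{\mathbf B}^H)\\ \mathrm{tr}(\dot{\mathbf B}\mathbf R\mathbf B^H) & \mathrm{tr}(\mathbf B\mathbf R\mathbf B^H)\end{bmatrix}.$$ Problem (SDR3.3) (fixed $\mathbf\Phi$): maximize $u$ over Hermitian $\mathbf W_k\succeq\mathbf 0$, $\mathbf R_0\succeq\mathbf 0$, $u\in\mathbb R$, subject to $\mathcal M(\sum_k\mathbf W_k+\mathbf R_0,u)\succeq\mathbf 0$, $(1+\tfrac1{\Gamma_k})\mathrm{tr}(\mathbf H_k\mathbf W_k)-\mathrm{tr}(\mathbf H_k(\sum_i\mathbf W_i+\mathbf R_0))\ge\sigma_k^2$ for all $k$, and $\sum_k\mathrm{tr}(\mathbf W_k)+\mathrm{tr}(\mathbf R_0)\le P_0$. *)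

theory Defs
  imports "HOL-Analysis.Analysis"
begin

text \<open>Complex matrices / vectors with explicit dimensions, represented as
  functions on 0-based natural-number indices; only entries with indices
  below the stated dimensions are ever inspected.\<close>

type_synonym cmat = "nat \<Rightarrow> nat \<Rightarrow> complex"
type_synonym cvec = "nat \<Rightarrow> complex"

definition mmul :: "nat \<Rightarrow> cmat \<Rightarrow> cmat \<Rightarrow> cmat" where
  "mmul n A B = (\<lambda>i j. \<Sum>l<n. A i l * B l j)"

definition mvmul :: "nat \<Rightarrow> cmat \<Rightarrow> cvec \<Rightarrow> cvec" where
  "mvmul n A x = (\<lambda>i. \<Sum>l<n. A i l * x l)"

definition adj :: "cmat \<Rightarrow> cmat" where
  "adj A = (\<lambda>i j. cnj (A j i))"

definition madd :: "cmat \<Rightarrow> cmat \<Rightarrow> cmat" where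
  "madd A B = (\<lambda>i j. A i j + B i j)"

definition msum :: "(nat \<Rightarrow> cmat) \<Rightarrow> nat set \<Rightarrow> cmat" where
  "msum W S = (\<lambda>i j. \<Sum>k\<in>S. W k i j)"

definition transp :: "cmat \<Rightarrow> cmat" where
  "transp A = (\<lambda>i j. A j i)"

definition mtrace :: "nat \<Rightarrow> cmat \<Rightarrow> complex" where
  "mtrace n A = (\<Sum>i<n. A i i)"

definition diagm :: "cvec \<Rightarrow> cmat" where
  "diagm v = (\<lambda>i j. if i = j then v i else 0)"

definition hermitian :: "nat \<Rightarrow> cmat \<Rightarrow> bool" where
  "hermitian n A \<longleftrightarrow> (\<forall>i<n. \<forall>j<n. A i j = cnj (A j i))"

definition psd :: "nat \<Rightarrow> cmat \<Rightarrow> bool" where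
  "psd n A \<longleftrightarrow> hermitian n A \<and>
     (\<forall>x::cvec. (\<Sum>i<n. \<Sum>j<n. cnj (x i) * A i j * x j) \<in> \<real> \<and>
                0 \<le> Re (\<Sum>i<n. \<Sum>j<n. cnj (x i) * A i j * x j))"

text \<open>Steering vector a(theta) (entry index n = 0..N-1 corresponds to the
  paper's (n-1)) and its entrywise derivative in theta.\<close>
definition steer :: "real \<Rightarrow> real \<Rightarrow> real \<Rightarrow> cvec" where
  "steer d lam th = (\<lambda>n. exp (\<i> * complex_of_real (2 * pi * real n * d * sin th / lam)))"

definition steer_dot :: "real \<Rightarrow> real \<Rightarrow> real \<Rightarrow> cvec" where
  "steer_dot d lam th = (\<lambda>n. vector_derivative (\<lambda>t. steer d lam t n) (at th))"

text \<open>Effective channel h_k = h_{d,k} + G^H Phi^H h_{r,k}  (G is N x M).\<close>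
definition hk :: "nat \<Rightarrow> cmat \<Rightarrow> cvec \<Rightarrow> cvec \<Rightarrow> cvec \<Rightarrow> cvec" where
  "hk N G v hdir hris = (\<lambda>i. hdir i + mvmul N (adj G) (mvmul N (adj (diagm v)) hris) i)"

definition outer :: "cvec \<Rightarrow> cvec \<Rightarrow> cmat" where
  "outer x y = (\<lambda>i j. x i * cnj (y j))"

definition Hk :: "nat \<Rightarrow> cmat \<Rightarrow> cvec \<Rightarrow> cvec \<Rightarrow> cvec \<Rightarrow> cmat" where
  "Hk N G v hdir hris = outer (hk N G v hdir hris) (hk N G v hdir hris)"

definition bvec :: "nat \<Rightarrow> cmat \<Rightarrow> cvec \<Rightarrow> real \<Rightarrow> real \<Rightarrow> real \<Rightarrow> cvec" where
  "bvec N G v d lam th = mvmul N (transp G) (mvmul N (transp (diagm v)) (steer d lam th))"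

definition bdvec :: "nat \<Rightarrow> cmat \<Rightarrow> cvec \<Rightarrow> real \<Rightarrow> real \<Rightarrow> real \<Rightarrow> cvec" where
  "bdvec N G v d lam th = mvmul N (transp G) (mvmul N (transp (diagm v)) (steer_dot d lam th))"

definition Bmat :: "nat \<Rightarrow> cmat \<Rightarrow> cvec \<Rightarrow> real \<Rightarrow> real \<Rightarrow> real \<Rightarrow> cmat" where
  "Bmat N G v d lam th = (\<lambda>i j. bvec N G v d lam th i * bvec N G v d lam th j)"

definition Bdmat :: "nat \<Rightarrow> cmat \<Rightarrow> cvec \<Rightarrow> real \<Rightarrow> real \<Rightarrow> real \<Rightarrow> cmat" where
  "Bdmat N G v d lam th = (\<lambda>i j. bdvec N G v d lam th i * bvec N G v d lam th j
                                 + bvec N G v d lam th i * bdvec N G v d lam th j)"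

definition FIMmat :: "nat \<Rightarrow> nat \<Rightarrow> cmat \<Rightarrow> cvec \<Rightarrow> real \<Rightarrow> real \<Rightarrow> real \<Rightarrow> cmat \<Rightarrow> real \<Rightarrow> cmat" where
  "FIMmat M N G v d lam th R u =
    (let B = Bmat N G v d lam th; Bd = Bdmat N G v d lam th;
         t = (\<lambda>X Y. mtrace M (mmul M (mmul M X R) (adj Y)))
     in (\<lambda>i j. if i = 0 \<and> j = 0 then t Bd Bd - complex_of_real u
              else if i = 0 \<and> j = 1 then t B Bd
              else if i = 1 \<and> j = 0 then t Bd B
              else if i = 1 \<and> j = 1 then t B B
              else 0))"

text \<open>Feasible set of (SDR3.3) for fixed reflection vector v (Phi = diag v);
  users are indexed by k in {1..K}.  Traces of products of Hermitian matrices
  are real; their real parts are compared.\<close>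
definition SDR33_feasible ::
  "nat \<Rightarrow> nat \<Rightarrow> nat \<Rightarrow> cmat \<Rightarrow> (nat \<Rightarrow> cvec) \<Rightarrow> (nat \<Rightarrow> cvec) \<Rightarrow> (nat \<Rightarrow> real) \<Rightarrow>
   (nat \<Rightarrow> real) \<Rightarrow> real \<Rightarrow> real \<Rightarrow> real \<Rightarrow> real \<Rightarrow> cvec \<Rightarrow>
   (nat \<Rightarrow> cmat) \<Rightarrow> cmat \<Rightarrow> real \<Rightarrow> bool" where
  "SDR33_feasible M N K G hdir hris Gam sig2 P0 th d lam v W R0 u \<longleftrightarrow>
     (\<forall>k\<in>{1..K}. psd M (W k)) \<and> psd M R0 \<and>
     psd 2 (FIMmat M N G v d lam th (madd (msum W {1..K}) R0) u) \<and>
     (\<forall>k\<in>{1..K}.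
        (1 + 1 / Gam k) * Re (mtrace M (mmul M (Hk N G v (hdir k) (hris k)) (W k)))
        - Re (mtrace M (mmul M (Hk N G v (hdir k) (hris k)) (madd (msum W {1..K}) R0)))
        \<ge> sig2 k) \<and>
     (\<Sum>k\<in>{1..K}. Re (mtrace M (W k))) + Re (mtrace M R0) \<le> P0"

definition SDR33_optimal ::
  "nat \<Rightarrow> nat \<Rightarrow> nat \<Rightarrow> cmat \<Rightarrow> (nat \<Rightarrow> cvec) \<Rightarrow> (nat \<Rightarrow> cvec) \<Rightarrow> (nat \<Rightarrow> real) \<Rightarrow>
   (nat \<Rightarrow> real) \<Rightarrow> real \<Rightarrow> real \<Rightarrow> real \<Rightarrow> real \<Rightarrow> cvec \<Rightarrow>
   (nat \<Rightarrow> cmat) \<Rightarrow> cmat \<Rightarrow> real \<Rightarrow> bool" where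
  "SDR33_optimal M N K G hdir hris Gam sig2 P0 th d lam v W R0 u \<longleftrightarrow>
     SDR33_feasible M N K G hdir hris Gam sig2 P0 th d lam v W R0 u \<and>
     (\<forall>W' R0' u'. SDR33_feasible M N K G hdir hris Gam sig2 P0 th d lam v W' R0' u' \<longrightarrow> u' \<le> u)"

end

theory Submission
  imports Defs
begin

text \<open>The sensing constraint only sees the total covariance \<open>\<Sum>k W\<^sub>k + R\<^sub>0\<close>, and so does the power
  budget. Absorbing \<open>R\<^sub>0\<close> into one beamformer, \<open>W\<^sub>1 := W\<^sub>1 + R\<^sub>0\<close>, therefore leaves both unchanged,
  keeps \<open>W\<^sub>1\<close> positive semidefinite, and can only increase the useful signal power
  \<open>tr(H\<^sub>1 W\<^sub>1)\<close> because \<open>tr(h h\<^sup>H R\<^sub>0) = h\<^sup>H R\<^sub>0 h \<ge> 0\<close>. The new point is feasible with the same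
  objective value \<open>u\<close>, hence optimal.\<close>

lemma sum_fun_upd_add:
  fixes f :: "'a \<Rightarrow> 'b::comm_monoid_add"
  assumes "finite S" and "j \<in> S"
  shows "(\<Sum>k\<in>S. (f(j := f j + c)) k) = sum f S + c"
proof -
  have "(\<Sum>k\<in>S. (f(j := f j + c)) k) = (f j + c) + (\<Sum>k\<in>S - {j}. (f(j := f j + c)) k)"
    using assms by (simp add: sum.remove)
  also have "(\<Sum>k\<in>S - {j}. (f(j := f j + c)) k) = (\<Sum>k\<in>S - {j}. f k)"
    by (rule sum.cong) auto
  also have "f j + c + (\<Sum>k\<in>S - {j}. f k) = sum f S + c"
    using assms by (simp add: sum.remove ac_simps)
  finally show ?thesis .
qed

lemma hermitian_madd:
  assumes "hermitian n A" and "hermitian n B"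
  shows "hermitian n (madd A B)"
  using assms unfolding hermitian_def madd_def by (metis complex_cnj_add)

lemma psd_madd:
  assumes "psd n A" and "psd n B"
  shows "psd n (madd A B)"
proof -
  have quad_add: "(\<Sum>i<n. \<Sum>j<n. cnj (x i) * madd A B i j * x j) =
      (\<Sum>i<n. \<Sum>j<n. cnj (x i) * A i j * x j) + (\<Sum>i<n. \<Sum>j<n. cnj (x i) * B i j * x j)" for x
    by (simp add: madd_def distrib_left distrib_right sum.distrib)
  show ?thesis
    using assms by (simp add: psd_def hermitian_madd quad_add Reals_add)
qed

lemma psd_zero: "psd n (\<lambda>i j. 0)"
  by (simp add: psd_def hermitian_def)

lemma mtrace_madd: "mtrace n (madd A B) = mtrace n A + mtrace n B"
  by (simp add: mtrace_def madd_def sum.distrib)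

lemma mtrace_mmul_madd_right:
  "mtrace n (mmul n H (madd A B)) = mtrace n (mmul n H A) + mtrace n (mmul n H B)"
  by (simp add: mtrace_def mmul_def madd_def distrib_left sum.distrib)

lemma mtrace_outer_mmul:
  "mtrace n (mmul n (outer h h) R) = (\<Sum>i<n. \<Sum>j<n. cnj (h i) * R i j * h j)"
proof -
  have "mtrace n (mmul n (outer h h) R) = (\<Sum>j<n. \<Sum>i<n. h j * cnj (h i) * R i j)"
    by (simp add: mtrace_def mmul_def outer_def)
  also have "\<dots> = (\<Sum>i<n. \<Sum>j<n. h j * cnj (h i) * R i j)"
    by (rule sum.swap)
  also have "\<dots> = (\<Sum>i<n. \<Sum>j<n. cnj (h i) * R i j * h j)"
    by (simp add: mult_ac)
  finally show ?thesis .
qed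

lemma Re_mtrace_outer_mmul_nonneg:
  assumes "psd n R"
  shows "0 \<le> Re (mtrace n (mmul n (outer h h) R))"
  using assms unfolding psd_def mtrace_outer_mmul by blast

lemma msum_fun_upd_madd:
  assumes "finite S" and "j \<in> S"
  shows "msum (W(j := madd (W j) R)) S = madd (msum W S) R"
proof (intro ext)
  fix a b
  have "(\<Sum>k\<in>S. (W(j := madd (W j) R)) k a b) = (\<Sum>k\<in>S. ((\<lambda>k. W k a b)(j := W j a b + R a b)) k)"
    by (rule sum.cong) (simp_all add: madd_def)
  then show "msum (W(j := madd (W j) R)) S a b = madd (msum W S) R a b"
    using sum_fun_upd_add[OF assms] by (simp add: msum_def madd_def)
qed

lemma SDR33_feasible_absorb_R0:
  assumes feas: "SDR33_feasible M N K G hdir hris Gam sig2 P0 th d lam v W R0 u"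
    and Gam_pos: "\<forall>k\<in>{1..K}. Gam k > 0"
    and j: "j \<in> {1..K}"
  shows "SDR33_feasible M N K G hdir hris Gam sig2 P0 th d lam v
           (W(j := madd (W j) R0)) (\<lambda>i j. 0) u"
proof -
  define W' where "W' = W(j := madd (W j) R0)"
  have R0: "psd M R0"
    using feas by (simp add: SDR33_feasible_def)
  have total: "madd (msum W' {1..K}) (\<lambda>i j. 0) = madd (msum W {1..K}) R0"
    using msum_fun_upd_madd[OF finite_atLeastAtMost j] by (simp add: W'_def madd_def)
  have power: "(\<Sum>k\<in>{1..K}. Re (mtrace M (W' k))) = (\<Sum>k\<in>{1..K}. Re (mtrace M (W k))) + Re (mtrace M R0)"
    using sum_fun_upd_add[OF finite_atLeastAtMost j, of "\<lambda>k. Re (mtrace M (W k))"]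
    by (simp add: W'_def mtrace_madd fun_upd_def if_distrib cong: if_cong)
  have signal: "Re (mtrace M (mmul M (Hk N G v (hdir k) (hris k)) (W k)))
      \<le> Re (mtrace M (mmul M (Hk N G v (hdir k) (hris k)) (W' k)))" for k
    using Re_mtrace_outer_mmul_nonneg[OF R0]
    by (simp add: W'_def Hk_def mtrace_mmul_madd_right)
  have SINR: "sig2 k \<le> (1 + 1 / Gam k) * Re (mtrace M (mmul M (Hk N G v (hdir k) (hris k)) (W' k)))
      - Re (mtrace M (mmul M (Hk N G v (hdir k) (hris k)) (madd (msum W {1..K}) R0)))"
    if k: "k \<in> {1..K}" for k
  proof -
    have old: "sig2 k \<le> (1 + 1 / Gam k) * Re (mtrace M (mmul M (Hk N G v (hdir k) (hris k)) (W k)))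
        - Re (mtrace M (mmul M (Hk N G v (hdir k) (hris k)) (madd (msum W {1..K}) R0)))"
      using feas k unfolding SDR33_feasible_def by blast
    have "Gam k > 0"
      using Gam_pos k by blast
    then have "0 \<le> 1 + 1 / Gam k"
      by (simp add: add_nonneg_nonneg)
    then show ?thesis
      using old mult_left_mono[OF signal] by (meson diff_right_mono order_trans)
  qed
  have W'_psd: "psd M (W' k)" if "k \<in> {1..K}" for k
    using feas that psd_madd[OF _ R0, of "W j"] by (simp add: SDR33_feasible_def W'_def)
  show ?thesis
    using feas W'_psd SINR unfolding W'_def [symmetric] SDR33_feasible_def total power
    by (simp add: psd_zero mtrace_def)
qed

theorem proposition7:
  fixes M N K :: nat
    and G :: cmat and hdir hris :: "nat \<Rightarrow> cvec"
    and Gam sig2 :: "nat \<Rightarrow> real" and P0 th d lam :: real and v :: cvec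
  assumes "M \<ge> 1" and "N \<ge> 1" and "K \<ge> 1"
    and "\<forall>k\<in>{1..K}. Gam k > 0" and "\<forall>k\<in>{1..K}. sig2 k > 0"
    and "P0 > 0" and "d > 0" and "lam > 0"
    and "\<forall>n<N. cmod (v n) = 1"
    and "\<exists>W R0 u. SDR33_optimal M N K G hdir hris Gam sig2 P0 th d lam v W R0 u"
  shows "\<exists>W R0 u. SDR33_optimal M N K G hdir hris Gam sig2 P0 th d lam v W R0 u \<and>
                 R0 = (\<lambda>i j. 0)"
proof -
  obtain W R0 u where opt: "SDR33_optimal M N K G hdir hris Gam sig2 P0 th d lam v W R0 u"
    using assms(10) by blast
  have "1 \<in> {1..K}"
    using assms(3) by simp
  then have "SDR33_feasible M N K G hdir hris Gam sig2 P0 th d lam v (W(1 := madd (W 1) R0)) (\<lambda>i j. 0) u"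
    using SDR33_feasible_absorb_R0 opt assms(4) unfolding SDR33_optimal_def by blast
  then have "SDR33_optimal M N K G hdir hris Gam sig2 P0 th d lam v (W(1 := madd (W 1) R0)) (\<lambda>i j. 0) u"
    using opt unfolding SDR33_optimal_def by blast
  then show ?thesis
    by blast
qed

end
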